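(* Let $f=(f_1,\dots,f_P)^\top:\mathbb{R}^N\to\mathbb{R}^P$ and $g=(g_1,\dots,g_M)^\top:\mathbb{R}^N\to\mathbb{R}^M$ satisfy: each $f_i$ is strictly convex and continuously differentiable; each $g_j$ is convex and continuously differentiable; the problem $\min\{f(x)\mid x\in\mathbb{X}\}$ with $\mathbb{X}:=\{x\mid g_j(x)\le 0,\ j=1,\dots,M\}$ is bounded; and Slater's condition holds. Let $\mathcal{P}$ be its upper image. Let $\tilde{\mathcal{P}}\subseteq\mathbb{R}^P$ be a closed and convex upper set and let $\epsilon:\mathcal{W}\to\mathbb{R}_+$ be constant, $\epsilon(w)\equiv\epsilon_0>0$. Then $\tilde{\mathcal{P}}$ is an $\epsilon(\cdot)$-inner approximation of $\mathcal{P}$ if and only if $\tilde{\mathcal{P}}\subseteq\mathcal{P}\subseteq\tilde{\mathcal{P}}-\epsilon_0\mathbf{1}$.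
   Context: $\mathcal{W}:=\{w\in\mathbb{R}^P_+\mid\mathbf{1}^\top w=1\}$, $\mathbf{1}=(1,\dots,1)^\top\in\mathbb{R}^P$. Bounded: there is $y$ with $f(x)\in y+\mathbb{R}^P_+$ for all $x\in\mathbb{X}$. Slater's condition: some $\bar x$ has $g_j(\bar x)<0$ for all $j$. A weak minimizer is $x^*\in\mathbb{X}$ with no $x\in\mathbb{X}$ satisfying $f(x^* )-f(x)\in\mathbb{R}^P_{++}$; with $\mathcal{X}$ the set of weak minimizers, the upper image is $\mathcal{P}:=\operatorname{cl}(f[\mathcal{X}]+\mathbb{R}^P_+)$. An upper set is a set $A$ with $A+\mathbb{R}^P_+= A$. For $w\in\mathcal{W}$ let $G(w):=\{y\in\mathbb{R}^P\mid w^\top y\ge 0\}$. Given $\epsilon:\mathcal{W}\to\mathbb{R}_+$, a set $\tilde{\mathcal{P}}\subseteq\mathbb{R}^P$ is an $\epsilon(\cdot)$-inner approximation (of $\mathcal{P}$) if $\tilde{\mathcal{P}}\subseteq\mathcal{P}\subseteq\bigcap_{w\in\mathcal{W}}\operatorname{cl}\left[\tilde{\mathcal{P}}-\epsilon(w)\mathbf{1}+G(w)\right]$. *)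

theory Defs
  imports "HOL-Analysis.Analysis"
begin

definition strictly_convex_on :: "'a::real_vector set \<Rightarrow> ('a \<Rightarrow> real) \<Rightarrow> bool" where
  "strictly_convex_on S h \<longleftrightarrow> convex S \<and>
     (\<forall>x\<in>S. \<forall>y\<in>S. \<forall>t::real. x \<noteq> y \<and> 0 < t \<and> t < 1 \<longrightarrow>
        h ((1 - t) *\<^sub>R x + t *\<^sub>R y) < (1 - t) * h x + t * h y)"

definition cont_diff :: "('a::real_normed_vector \<Rightarrow> real) \<Rightarrow> bool" where
  "cont_diff h \<longleftrightarrow> (\<exists>h'::'a \<Rightarrow> ('a \<Rightarrow>\<^sub>L real).
      (\<forall>x. (h has_derivative blinfun_apply (h' x)) (at x)) \<and> continuous_on UNIV h')"

definition nonneg_orthant :: "(real^'p) set" where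
  "nonneg_orthant = {y. \<forall>i. 0 \<le> y $ i}"

definition pos_orthant :: "(real^'p) set" where
  "pos_orthant = {y. \<forall>i. 0 < y $ i}"

definition ones :: "real^'p" where
  "ones = (\<chi> i. 1)"

definition msum :: "(real^'p) set \<Rightarrow> (real^'p) set \<Rightarrow> (real^'p) set" where
  "msum A B = {a + b | a b. a \<in> A \<and> b \<in> B}"

definition weights :: "(real^'p) set" where
  "weights = {w. (\<forall>i. 0 \<le> w $ i) \<and> sum (\<lambda>i. w $ i) UNIV = 1}"

text \<open>Feasible set X = {x | g_j x \<le> 0, j = 1..M}; constraints indexed by j < M.\<close>
definition feasible :: "nat \<Rightarrow> (nat \<Rightarrow> real^'n \<Rightarrow> real) \<Rightarrow> (real^'n) set" where
  "feasible M g = {x. \<forall>j<M. g j x \<le> 0}"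

definition bounded_problem :: "(real^'n \<Rightarrow> real^'p) \<Rightarrow> (real^'n) set \<Rightarrow> bool" where
  "bounded_problem f X \<longleftrightarrow> (\<exists>y. \<forall>x\<in>X. f x \<in> msum {y} nonneg_orthant)"

definition slater :: "nat \<Rightarrow> (nat \<Rightarrow> real^'n \<Rightarrow> real) \<Rightarrow> bool" where
  "slater M g \<longleftrightarrow> (\<exists>xb. \<forall>j<M. g j xb < 0)"

definition weak_minimizers :: "(real^'n \<Rightarrow> real^'p) \<Rightarrow> (real^'n) set \<Rightarrow> (real^'n) set" where
  "weak_minimizers f X = {xs \<in> X. \<not> (\<exists>x\<in>X. f xs - f x \<in> pos_orthant)}"

definition upper_image :: "(real^'n \<Rightarrow> real^'p) \<Rightarrow> (real^'n) set \<Rightarrow> (real^'p) set" where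
  "upper_image f X = closure (msum (f ` weak_minimizers f X) nonneg_orthant)"

definition upper_set :: "(real^'p) set \<Rightarrow> bool" where
  "upper_set A \<longleftrightarrow> msum A nonneg_orthant = A"

definition halfspace_G :: "real^'p \<Rightarrow> (real^'p) set" where
  "halfspace_G w = {y. w \<bullet> y \<ge> 0}"

definition inner_approx :: "(real^'p) set \<Rightarrow> (real^'p) set \<Rightarrow> (real^'p \<Rightarrow> real) \<Rightarrow> bool" where
  "inner_approx Pt P eps \<longleftrightarrow> Pt \<subseteq> P \<and>
     P \<subseteq> (\<Inter>w\<in>weights. closure (msum ((\<lambda>p. p - eps w *\<^sub>R ones) ` Pt) (halfspace_G w)))"

end

theory Submission
  imports Defs
begin

text \<open>For a closed convex upper set \<open>A\<close>, every point outside \<open>A\<close> is strictly separated from it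
  by a hyperplane whose normal lies in the nonnegative orthant (a negative component of the
  normal would be unbounded below along the corresponding axis inside \<open>A\<close>). Rescaled to a weight
  \<open>w\<close>, that hyperplane also separates the point from \<open>cl (A + G(w))\<close>. Hence
  \<open>A = \<Inter>\<^sub>w cl (A + G(w))\<close>, and for \<open>A = Pt - eps0 \<one>\<close> this is the claimed equivalence.\<close>

lemma upper_set_iff: "upper_set A \<longleftrightarrow> (\<forall>x\<in>A. \<forall>v\<in>nonneg_orthant. x + v \<in> A)"
proof -
  have "A \<subseteq> msum A nonneg_orthant"
    unfolding msum_def nonneg_orthant_def by (force intro: exI[of _ 0])
  then show ?thesis
    unfolding upper_set_def msum_def by blast
qed

lemma upper_set_translation:
  assumes "upper_set A"
  shows "upper_set ((+) c ` A)"
  using assms unfolding upper_set_iff by (auto simp: add.commute add.left_commute)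

lemma weights_nonempty: "weights \<noteq> {}"
proof -
  have "((\<chi> i. 1 / real CARD('p)) :: real^'p) \<in> weights"
    by (simp add: weights_def)
  then show ?thesis by blast
qed

lemma nonneg_vector_eq_scaleR_weight:
  fixes a :: "real^'p"
  assumes nonneg: "\<And>i. 0 \<le> a $ i" and "a \<noteq> 0"
  obtains s w where "0 < s" "w \<in> weights" "a = s *\<^sub>R w"
proof
  define s where "s = sum (\<lambda>i. a $ i) UNIV"
  have "s \<noteq> 0"
    using assms by (auto simp: s_def sum_nonneg_eq_0_iff vec_eq_iff)
  then show "0 < s"
    using nonneg by (simp add: s_def sum_nonneg order.not_eq_order_implies_strict)
  then show "(1 / s) *\<^sub>R a \<in> weights"
    using nonneg by (simp add: weights_def s_def sum_divide_distrib[symmetric])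
  show "a = s *\<^sub>R ((1 / s) *\<^sub>R a)"
    using \<open>s \<noteq> 0\<close> by simp
qed

lemma upper_set_normal_nonneg:
  assumes "upper_set A" and "x \<in> A" and above: "\<forall>x\<in>A. b < a \<bullet> x"
  shows "0 \<le> a $ i"
proof (rule ccontr)
  assume "\<not> 0 \<le> a $ i"
  then have neg: "a $ i < 0" by simp
  define t where "t = (a \<bullet> x - b) / - a $ i"
  have "0 \<le> t"
    using above \<open>x \<in> A\<close> neg unfolding t_def by (intro divide_nonneg_pos) auto
  then have "x + axis i t \<in> A"
    using assms(1,2) by (simp add: upper_set_iff nonneg_orthant_def axis_def)
  then have "b < a \<bullet> (x + axis i t)"
    using above by blast
  then have "b < a \<bullet> x + a $ i * t"
    by (simp add: inner_add_right inner_axis)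
  moreover have "a $ i * t = b - a \<bullet> x"
    using neg by (simp add: t_def field_simps)
  ultimately show False by simp
qed

lemma notin_closure_msum_halfspace_G:
  assumes "w \<bullet> y < c" and "\<forall>x\<in>A. c \<le> w \<bullet> x"
  shows "y \<notin> closure (msum A (halfspace_G w))"
proof -
  have "msum A (halfspace_G w) \<subseteq> {z. c \<le> w \<bullet> z}"
    using assms(2) by (force simp: msum_def halfspace_G_def inner_add_right)
  then have "closure (msum A (halfspace_G w)) \<subseteq> {z. c \<le> w \<bullet> z}"
    by (rule closure_minimal[OF _ closed_halfspace_ge])
  then show ?thesis
    using assms(1) by auto
qed

lemma upper_set_separating_weight:
  fixes A :: "(real^'p) set"
  assumes "closed A" "convex A" "upper_set A" and "y \<notin> A"
  shows "\<exists>w\<in>weights. y \<notin> closure (msum A (halfspace_G w))"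
proof (cases "A = {}")
  case True
  then show ?thesis
    using weights_nonempty by (auto simp: msum_def)
next
  case False
  then obtain x0 where "x0 \<in> A" by blast
  obtain a b where sep: "a \<bullet> y < b" "\<forall>x\<in>A. b < a \<bullet> x"
    using separating_hyperplane_closed_point[OF assms(2,1,4)] by blast
  have "0 \<le> a $ i" for i
    using upper_set_normal_nonneg[OF assms(3) \<open>x0 \<in> A\<close> sep(2)] .
  moreover have "a \<noteq> 0"
    using sep \<open>x0 \<in> A\<close> by auto
  ultimately obtain s w where "0 < s" "w \<in> weights" and a: "a = s *\<^sub>R w"
    by (rule nonneg_vector_eq_scaleR_weight)
  have "y \<notin> closure (msum A (halfspace_G w))"
  proof (rule notin_closure_msum_halfspace_G[where c = "b / s"])
    show "w \<bullet> y < b / s"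
      using sep(1) \<open>0 < s\<close> by (simp add: a pos_less_divide_eq mult.commute)
    show "\<forall>x\<in>A. b / s \<le> w \<bullet> x"
      using sep(2) \<open>0 < s\<close> by (simp add: a pos_divide_le_eq mult.commute less_imp_le)
  qed
  with \<open>w \<in> weights\<close> show ?thesis by blast
qed

lemma Inter_closure_msum_halfspace_G:
  fixes A :: "(real^'p) set"
  assumes "closed A" "convex A" "upper_set A"
  shows "(\<Inter>w\<in>weights. closure (msum A (halfspace_G w))) = A"
proof
  show "(\<Inter>w\<in>weights. closure (msum A (halfspace_G w))) \<subseteq> A"
    using upper_set_separating_weight[OF assms] by blast
  have "A \<subseteq> msum A (halfspace_G w)" for w
    unfolding msum_def halfspace_G_def by (force intro: exI[of _ 0])
  then show "A \<subseteq> (\<Inter>w\<in>weights. closure (msum A (halfspace_G w)))"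
    using closure_subset by blast
qed

theorem proposition4p3:
  fixes f :: "real^'n \<Rightarrow> real^'p"
    and g :: "nat \<Rightarrow> real^'n \<Rightarrow> real"
    and M :: nat
    and Pt :: "(real^'p) set"
    and eps :: "real^'p \<Rightarrow> real"
    and eps0 :: real
  assumes f_sconv: "\<And>i. strictly_convex_on UNIV (\<lambda>x. f x $ i)"
    and f_C1: "\<And>i. cont_diff (\<lambda>x. f x $ i)"
    and g_conv: "\<And>j. j < M \<Longrightarrow> convex_on UNIV (g j)"
    and g_C1: "\<And>j. j < M \<Longrightarrow> cont_diff (g j)"
    and bdd: "bounded_problem f (feasible M g)"
    and slater: "slater M g"
    and Pt_closed: "closed Pt"
    and Pt_convex: "convex Pt"
    and Pt_upper: "upper_set Pt"
    and eps0_pos: "eps0 > 0"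
    and eps_const: "\<And>w. w \<in> weights \<Longrightarrow> eps w = eps0"
  shows "inner_approx Pt (upper_image f (feasible M g)) eps \<longleftrightarrow>
    (Pt \<subseteq> upper_image f (feasible M g) \<and>
     upper_image f (feasible M g) \<subseteq> (\<lambda>p. p - eps0 *\<^sub>R ones) ` Pt)"
proof -
  define A where "A = (+) (- eps0 *\<^sub>R ones) ` Pt"
  have shift: "(\<lambda>p. p - eps0 *\<^sub>R ones) ` Pt = A"
    unfolding A_def by (simp add: add.commute)
  have "closed A" "convex A" "upper_set A"
    unfolding A_def
    by (rule closed_translation[OF Pt_closed] convex_translation[OF Pt_convex]
        upper_set_translation[OF Pt_upper])+
  then have "(\<Inter>w\<in>weights. closure (msum ((\<lambda>p. p - eps w *\<^sub>R ones) ` Pt) (halfspace_G w))) = A"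
    using Inter_closure_msum_halfspace_G[of A]
    by (simp add: eps_const shift cong: INF_cong)
  then show ?thesis
    by (simp add: inner_approx_def shift)
qed

end
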